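(* Let $s,k$ be integers with $1\leq k<s$. The Laplacian spectrum of the spider $T(s,k)$ is $$\{0^{[1]},\ \theta^{[k-1]},\ \lambda_1^{[1]},\ 1^{[s-k-1]},\ \lambda_2^{[1]},\ \overline{\theta}^{[k-1]},\ \lambda_3^{[1]}\},$$ where $\theta=\frac{3-\sqrt{5}}{2}$, $\overline{\theta}=\frac{3+\sqrt{5}}{2}$, and $\lambda_1,\lambda_2,\lambda_3$ are the roots of $x^3-(s+4)x^2+(3s+4)x-(s+k+1)$.
   Context: For a graph $G$, the Laplacian matrix is $L(G)=D(G)-A(G)$, with $D(G)$ the diagonal degree matrix and $A(G)$ the adjacency matrix; its Laplacian spectrum is the multiset of eigenvalues of $L(G)$, and $a^{[m]}$ denotes the eigenvalue $a$ with multiplicity $m$ (listed values may coincide, in which case multiplicities add). For integers $1\leq k\leq s$, the spider $T(s,k)$ is the tree obtained from the star $K_{1,s}$ by extending $k$ of its $s$ rays by one extra edge each; it has $s+k+1$ vertices. *)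

theory Defs
  imports "Jordan_Normal_Form.Char_Poly" "HOL-Computational_Algebra.Polynomial"
begin

text \<open>A finite simple graph on the vertex set {0..<n} is given by a symmetric,
irreflexive adjacency relation E.  Its Laplacian matrix is L = D - A.\<close>

definition adjacency_matrix :: "nat \<Rightarrow> (nat \<Rightarrow> nat \<Rightarrow> bool) \<Rightarrow> real mat" where
  "adjacency_matrix n E = mat n n (\<lambda>(i,j). if E i j then 1 else 0)"

definition degree :: "nat \<Rightarrow> (nat \<Rightarrow> nat \<Rightarrow> bool) \<Rightarrow> nat \<Rightarrow> nat" where
  "degree n E i = card {j. j < n \<and> E i j}"

definition degree_matrix :: "nat \<Rightarrow> (nat \<Rightarrow> nat \<Rightarrow> bool) \<Rightarrow> real mat" where
  "degree_matrix n E = mat n n (\<lambda>(i,j). if i = j then real (degree n E i) else 0)"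

definition laplacian_matrix :: "nat \<Rightarrow> (nat \<Rightarrow> nat \<Rightarrow> bool) \<Rightarrow> real mat" where
  "laplacian_matrix n E = degree_matrix n E - adjacency_matrix n E"

definition laplacian_spectrum :: "nat \<Rightarrow> (nat \<Rightarrow> nat \<Rightarrow> bool) \<Rightarrow> complex multiset" where
  "laplacian_spectrum n E = proots (char_poly (map_mat complex_of_real (laplacian_matrix n E)))"

text \<open>The spider T(s,k) on vertices {0..<s+k+1}: vertex 0 is the centre, vertices
1..s are the neighbours of the centre, and for 1 \<le> i \<le> k the vertex s+i is a
pendant vertex attached to vertex i (extending the ray through i).\<close>

definition spider_edge :: "nat \<Rightarrow> nat \<Rightarrow> nat \<Rightarrow> nat \<Rightarrow> bool" where
  "spider_edge s k u v \<longleftrightarrow>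
     (u = 0 \<and> 1 \<le> v \<and> v \<le> s) \<or> (v = 0 \<and> 1 \<le> u \<and> u \<le> s) \<or>
     (1 \<le> u \<and> u \<le> k \<and> v = s + u) \<or> (1 \<le> v \<and> v \<le> k \<and> u = s + v)"

definition spider_laplacian_spectrum :: "nat \<Rightarrow> nat \<Rightarrow> complex multiset" where
  "spider_laplacian_spectrum s k = laplacian_spectrum (s + k + 1) (spider_edge s k)"

end

theory Submission
  imports Defs
begin

(* Let q(x) = x^2 - 3x + 1, whose roots are theta and its conjugate.  For x <> 1 with
   q(x) <> 0, column operations make the characteristic matrix xI - L of T(s,k) upper
   triangular: each pendant vertex s + c of a long ray is eliminated against its neighbour c,
   and the centre's column is replaced by the vector v with v_0 = 1 and (xI - L) v a multiple
   of e_0.  The pivots are x - 1 at the s vertices other than 0, 1, ..., k, q(x)/(x - 1) at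
   the vertices 1, ..., k, and at the centre a rational function whose product with
   q(x)(x - 1) is x times the cubic.  Hence det (xI - L) = x q(x)^(k-1) (x - 1)^(s-k-1) times
   the cubic for all but finitely many x, and therefore as polynomials. *)

lemma poly_eqI_cofinite:
  fixes p q :: "'a::{idom,ring_char_0} poly"
  assumes "finite S" and "\<And>x. x \<notin> S \<Longrightarrow> poly p x = poly q x"
  shows "p = q"
proof (rule ccontr)
  assume "p \<noteq> q"
  then have "finite {x. poly (p - q) x = 0}"
    by (intro poly_roots_finite) simp
  moreover have "UNIV \<subseteq> S \<union> {x. poly (p - q) x = 0}"
    using assms(2) by auto
  ultimately have "finite (UNIV :: 'a set)"
    using assms(1) by (meson finite_UnI finite_subset)
  then show False
    using infinite_UNIV_char_0 by blast
qed

lemma det_eq_prod_diag_mult_unit_lower_triangular: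
  assumes M: "M \<in> carrier_mat n n" and B: "B \<in> carrier_mat n n"
    and B_lower: "\<And>i j. i < j \<Longrightarrow> j < n \<Longrightarrow> B $$ (i, j) = 0"
    and B_diag: "\<And>i. i < n \<Longrightarrow> B $$ (i, i) = 1"
    and MB_upper: "\<And>i j. j < i \<Longrightarrow> i < n \<Longrightarrow> (M * B) $$ (i, j) = 0"
  shows "det M = (\<Prod>i<n. (M * B) $$ (i, i))"
proof -
  have MB: "M * B \<in> carrier_mat n n"
    using M B by simp
  have "det B = prod_list (diag_mat B)"
    by (rule det_lower_triangular[OF B_lower B])
  also have "\<dots> = 1"
    unfolding prod_list_diag_prod using B B_diag by (auto intro: prod.neutral)
  finally have "det M = det (M * B)"
    using det_mult[OF M B] by simp
  also have "\<dots> = prod_list (diag_mat (M * B))"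
    by (rule det_upper_triangular[OF _ MB])
      (use MB MB_upper in \<open>auto simp: upper_triangular_def\<close>)
  also have "\<dots> = (\<Prod>i<n. (M * B) $$ (i, i))"
    unfolding prod_list_diag_prod using M by (simp add: atLeast0LessThan)
  finally show ?thesis .
qed

lemma laplacian_matrix_entry:
  assumes "i < n" "j < n" "\<not> E i i"
  shows "laplacian_matrix n E $$ (i, j) =
    (if i = j then real (degree n E i) else if E i j then -1 else 0)"
  using assms by (auto simp: laplacian_matrix_def degree_matrix_def adjacency_matrix_def)

lemma poly_char_poly_laplacian:
  fixes a :: complex
  assumes "\<And>i. i < n \<Longrightarrow> \<not> E i i"
  shows "poly (char_poly (map_mat complex_of_real (laplacian_matrix n E))) a =
    det (mat n n (\<lambda>(i, j). if i = j then a - of_nat (degree n E i) else if E i j then 1 else 0))"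
    (is "_ = det ?A")
proof -
  have L: "map_mat complex_of_real (laplacian_matrix n E) \<in> carrier_mat n n"
    unfolding laplacian_matrix_def degree_matrix_def adjacency_matrix_def by auto
  have "- char_matrix (map_mat complex_of_real (laplacian_matrix n E)) a = ?A"
    by (rule eq_matI) (use L assms laplacian_matrix_entry in \<open>auto simp: char_matrix_def\<close>)
  then show ?thesis
    using char_poly_matrix[OF L] by simp
qed

definition spider_degree :: "nat \<Rightarrow> nat \<Rightarrow> nat \<Rightarrow> nat" where
  "spider_degree s k i = (if i = 0 then s else if i \<le> k then 2 else 1)"

lemma spider_edge_irrefl:
  assumes "k \<le> s"
  shows "\<not> spider_edge s k i i"
  using assms by (auto simp: spider_edge_def)

lemma degree_spider_edge:
  assumes "k \<le> s" "i < s + k + 1"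
  shows "degree (s + k + 1) (spider_edge s k) i = spider_degree s k i"
proof -
  let ?N = "{j. j < s + k + 1 \<and> spider_edge s k i j}"
  consider "i = 0" | "1 \<le> i" "i \<le> k" | "k < i" "i \<le> s" | "s < i" by linarith
  then show ?thesis
  proof cases
    case 1
    then have "?N = {1..s}" using assms by (auto simp: spider_edge_def)
    then show ?thesis using 1 by (simp add: degree_def spider_degree_def)
  next
    case 2
    then have "?N = {0, s + i}" using assms by (auto simp: spider_edge_def)
    then show ?thesis using 2 assms by (simp add: degree_def spider_degree_def)
  next
    case 3
    then have "?N = {0}" using assms by (auto simp: spider_edge_def)
    then show ?thesis using 3 by (simp add: degree_def spider_degree_def)
  next
    case 4
    then have "?N = {i - s}" using assms by (auto simp: spider_edge_def)
    then show ?thesis using 4 assms by (simp add: degree_def spider_degree_def)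
  qed
qed

definition spider_char_entry :: "nat \<Rightarrow> nat \<Rightarrow> 'a::field \<Rightarrow> nat \<Rightarrow> nat \<Rightarrow> 'a" where
  "spider_char_entry s k a i j =
     (if i = j then a - of_nat (spider_degree s k i) else if spider_edge s k i j then 1 else 0)"

(* Column 0 is the vector v with v_0 = 1 and ((aI - L) v)_r = 0 for r > 0; for 1 <= c <= k,
   column c adds -1/(a - 1) times column s + c, clearing the entry of the pendant vertex s + c. *)
definition spider_elim_entry :: "nat \<Rightarrow> nat \<Rightarrow> 'a::field \<Rightarrow> nat \<Rightarrow> nat \<Rightarrow> 'a" where
  "spider_elim_entry s k a j c =
     (if j = c then 1
      else if c = 0 then
        (if j \<le> k then - (a - 1) / (a\<^sup>2 - 3 * a + 1)
         else if j \<le> s then - 1 / (a - 1) else 1 / (a\<^sup>2 - 3 * a + 1))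
      else if c \<le> k \<and> j = s + c then - 1 / (a - 1) else 0)"

definition spider_cubic :: "nat \<Rightarrow> nat \<Rightarrow> 'a::comm_ring_1 poly" where
  "spider_cubic s k = [: - of_nat (s + k + 1), of_nat (3 * s + 4), - of_nat (s + 4), 1 :]"

lemma poly_spider_cubic:
  "poly (spider_cubic s k) a =
     a ^ 3 - of_nat (s + 4) * a\<^sup>2 + of_nat (3 * s + 4) * a - of_nat (s + k + 1)"
  by (simp add: spider_cubic_def algebra_simps power2_eq_square power3_eq_cube)

lemma spider_cubic_nonzero: "spider_cubic s k \<noteq> 0"
  by (simp add: spider_cubic_def)

definition spider_centre_pivot :: "nat \<Rightarrow> nat \<Rightarrow> 'a::field \<Rightarrow> 'a" where
  "spider_centre_pivot s k a =
     a - of_nat s - of_nat k * (a - 1) / (a\<^sup>2 - 3 * a + 1) - of_nat (s - k) / (a - 1)"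

context
  fixes s k :: nat and a :: "'a::field"
  assumes k_le_s: "k \<le> s" and a_ne_1: "a \<noteq> 1" and q_ne_0: "a\<^sup>2 - 3 * a + 1 \<noteq> 0"
begin

lemma spider_elim_below_diag_centre:
  assumes "0 < r" "r < s + k + 1"
  shows "(\<Sum>j<s + k + 1. spider_char_entry s k a r j * spider_elim_entry s k a j 0) = 0"
proof -
  let ?f = "\<lambda>j. spider_char_entry s k a r j * spider_elim_entry s k a j 0"
  consider "r \<le> k" | "k < r" "r \<le> s" | "s < r" by linarith
  then show ?thesis
  proof cases
    case 1
    have "sum ?f {..<s + k + 1} = sum ?f {0, r, s + r}"
      by (rule sum.mono_neutral_right)
        (use assms 1 k_le_s in \<open>auto simp: spider_char_entry_def spider_edge_def\<close>)
    also have "\<dots> = 0"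
      using assms 1 a_ne_1 q_ne_0 k_le_s
      by (simp add: spider_char_entry_def spider_elim_entry_def spider_edge_def spider_degree_def
          field_simps) (simp add: algebra_simps power2_eq_square)
    finally show ?thesis .
  next
    case 2
    have "sum ?f {..<s + k + 1} = sum ?f {0, r}"
      by (rule sum.mono_neutral_right)
        (use assms 2 in \<open>auto simp: spider_char_entry_def spider_edge_def\<close>)
    also have "\<dots> = 0"
      using assms 2 a_ne_1
      by (simp add: spider_char_entry_def spider_elim_entry_def spider_edge_def spider_degree_def)
    finally show ?thesis .
  next
    case 3
    have "sum ?f {..<s + k + 1} = sum ?f {r - s, r}"
      by (rule sum.mono_neutral_right)
        (use assms 3 k_le_s in \<open>auto simp: spider_char_entry_def spider_edge_def\<close>)
    also have "\<dots> = 0"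
      using assms 3 k_le_s
      by (simp add: spider_char_entry_def spider_elim_entry_def spider_edge_def spider_degree_def)
        (auto simp: add_divide_distrib[symmetric])
    finally show ?thesis .
  qed
qed

lemma spider_elim_below_diag_noncentre:
  assumes "0 < c" "c < r" "r < s + k + 1"
  shows "(\<Sum>j<s + k + 1. spider_char_entry s k a r j * spider_elim_entry s k a j c) = 0"
proof -
  let ?f = "\<lambda>j. spider_char_entry s k a r j * spider_elim_entry s k a j c"
  have "sum ?f {..<s + k + 1} = sum ?f ({c} \<union> (if c \<le> k then {s + c} else {}))"
    by (rule sum.mono_neutral_right)
      (use assms in \<open>auto simp: spider_elim_entry_def\<close>)
  also have "\<dots> = 0"
    using assms a_ne_1 k_le_s
    by (simp add: spider_char_entry_def spider_elim_entry_def spider_edge_def spider_degree_def)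
  finally show ?thesis .
qed

lemma spider_elim_diag:
  assumes "r < s + k + 1"
  shows "(\<Sum>j<s + k + 1. spider_char_entry s k a r j * spider_elim_entry s k a j r) =
    (if r = 0 then spider_centre_pivot s k a
     else if r \<le> k then (a\<^sup>2 - 3 * a + 1) / (a - 1) else a - 1)"
proof -
  let ?f = "\<lambda>j. spider_char_entry s k a r j * spider_elim_entry s k a j r"
  consider "r = 0" | "1 \<le> r" "r \<le> k" | "k < r" by linarith
  then show ?thesis
  proof cases
    case 1
    have "sum ?f {..<s + k + 1} = sum ?f (insert 0 ({1..k} \<union> {k<..s}))"
      by (rule sum.mono_neutral_right)
        (use 1 k_le_s in \<open>auto simp: spider_char_entry_def spider_edge_def\<close>)
    also have "\<dots> = ?f 0 + sum ?f {1..k} + sum ?f {k<..s}"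
      using sum.union_disjoint[of "{1..k}" "{k<..s}" ?f] by (simp add: add.assoc disjoint_iff)
    also have "sum ?f {1..k} = (\<Sum>j\<in>{1..k}. - (a - 1) / (a\<^sup>2 - 3 * a + 1))"
      by (rule sum.cong) (use 1 k_le_s in
        \<open>auto simp: spider_char_entry_def spider_elim_entry_def spider_edge_def\<close>)
    also have "sum ?f {k<..s} = (\<Sum>j\<in>{k<..s}. - 1 / (a - 1))"
      by (rule sum.cong) (use 1 in
        \<open>auto simp: spider_char_entry_def spider_elim_entry_def spider_edge_def\<close>)
    also have "?f 0 + (\<Sum>j\<in>{1..k}. - (a - 1) / (a\<^sup>2 - 3 * a + 1))
        + (\<Sum>j\<in>{k<..s}. - 1 / (a - 1)) = spider_centre_pivot s k a"
      using 1 q_ne_0 a_ne_1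
      by (simp add: spider_char_entry_def spider_elim_entry_def spider_degree_def spider_centre_pivot_def
          field_simps)
    finally show ?thesis
      using 1 by simp
  next
    case 2
    have "sum ?f {..<s + k + 1} = sum ?f {r, s + r}"
      by (rule sum.mono_neutral_right)
        (use assms 2 in \<open>auto simp: spider_elim_entry_def\<close>)
    also have "\<dots> = (a\<^sup>2 - 3 * a + 1) / (a - 1)"
      using 2 a_ne_1 k_le_s
      by (simp add: spider_char_entry_def spider_elim_entry_def spider_edge_def spider_degree_def
          field_simps power2_eq_square)
    finally show ?thesis using 2 by simp
  next
    case 3
    have "sum ?f {..<s + k + 1} = sum ?f {r}"
      by (rule sum.mono_neutral_right)
        (use assms 3 in \<open>auto simp: spider_elim_entry_def\<close>)
    also have "\<dots> = a - 1"
      using 3 by (simp add: spider_char_entry_def spider_elim_entry_def spider_degree_def)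
    finally show ?thesis using 3 by simp
  qed
qed

lemma spider_centre_pivot_mult:
  "spider_centre_pivot s k a * ((a\<^sup>2 - 3 * a + 1) * (a - 1)) = a * poly (spider_cubic s k) a"
proof -
  define q where "q = a\<^sup>2 - 3 * a + 1"
  have "a - 1 \<noteq> 0" "q \<noteq> 0"
    using a_ne_1 q_ne_0 by (simp_all add: q_def)
  then have "spider_centre_pivot s k a * (q * (a - 1)) =
      (a - of_nat s) * q * (a - 1) - of_nat k * (a - 1) * (a - 1) - of_nat (s - k) * q"
    unfolding spider_centre_pivot_def q_def[symmetric] by (simp add: field_simps)
  also have "\<dots> = a * poly (spider_cubic s k) a"
    using k_le_s
    by (simp add: q_def of_nat_diff poly_spider_cubic algebra_simps power2_eq_square power3_eq_cube)
  finally show ?thesis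
    unfolding q_def .
qed

lemma det_spider_char_mat:
  assumes "1 \<le> k" "k < s"
  shows "det (mat (s + k + 1) (s + k + 1) (\<lambda>(i, j). spider_char_entry s k a i j)) =
    a * (a\<^sup>2 - 3 * a + 1) ^ (k - 1) * (a - 1) ^ (s - k - 1) * poly (spider_cubic s k) a"
proof -
  let ?n = "s + k + 1"
  let ?M = "mat ?n ?n (\<lambda>(i, j). spider_char_entry s k a i j)"
  let ?B = "mat ?n ?n (\<lambda>(j, c). spider_elim_entry s k a j c)"
  define q where "q = a\<^sup>2 - 3 * a + 1"
  define pivot where
    "pivot r = (if r = 0 then spider_centre_pivot s k a else if r \<le> k then q / (a - 1) else a - 1)"
    for r
  have MB_entry: "(?M * ?B) $$ (r, c) =
      (\<Sum>j<?n. spider_char_entry s k a r j * spider_elim_entry s k a j c)"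
    if "r < ?n" "c < ?n" for r c
    using that by (simp add: scalar_prod_def atLeast0LessThan)
  have "det ?M = (\<Prod>r<?n. (?M * ?B) $$ (r, r))"
  proof (rule det_eq_prod_diag_mult_unit_lower_triangular)
    show "?M \<in> carrier_mat ?n ?n" "?B \<in> carrier_mat ?n ?n"
      by auto
    show "?B $$ (i, j) = 0" if "i < j" "j < ?n" for i j
      using that by (simp add: spider_elim_entry_def)
    show "?B $$ (i, i) = 1" if "i < ?n" for i
      using that by (simp add: spider_elim_entry_def)
    show "(?M * ?B) $$ (i, j) = 0" if "j < i" "i < ?n" for i j
      using that MB_entry spider_elim_below_diag_centre spider_elim_below_diag_noncentre
      by (cases "j = 0") auto
  qed
  also have "\<dots> = (\<Prod>r<?n. pivot r)"
    using MB_entry spider_elim_diag by (intro prod.cong) (auto simp: pivot_def q_def)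
  also have "\<dots> = pivot 0 * (\<Prod>r\<in>{1..k}. pivot r) * (\<Prod>r\<in>{k<..s + k}. pivot r)"
  proof -
    have "{..<?n} = insert 0 ({1..k} \<union> {k<..s + k})"
      by auto
    then show ?thesis
      by (simp add: prod.union_disjoint disjoint_iff mult.assoc)
  qed
  also have "(\<Prod>r\<in>{1..k}. pivot r) = (q / (a - 1)) ^ k"
    by (simp add: pivot_def)
  also have "(\<Prod>r\<in>{k<..s + k}. pivot r) = (a - 1) ^ s"
    by (simp add: pivot_def)
  also have "pivot 0 * (q / (a - 1)) ^ k * (a - 1) ^ s =
      (spider_centre_pivot s k a * (q * (a - 1))) * (q ^ (k - 1) * (a - 1) ^ (s - k - 1))"
  proof -
    obtain k' where "k = Suc k'"
      using assms(1) by (cases k) auto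
    moreover obtain m where "s = Suc (k + m)"
      using assms(2) by (auto dest: less_imp_Suc_add)
    moreover have "a - 1 \<noteq> 0"
      using a_ne_1 by simp
    ultimately show ?thesis
      by (simp add: pivot_def power_divide power_add field_simps)
  qed
  also have "spider_centre_pivot s k a * (q * (a - 1)) = a * poly (spider_cubic s k) a"
    unfolding q_def by (rule spider_centre_pivot_mult)
  finally show ?thesis
    unfolding q_def by (simp add: mult_ac)
qed

end

lemma char_poly_spider_laplacian:
  assumes "1 \<le> k" "k < s"
  shows "char_poly (map_mat complex_of_real (laplacian_matrix (s + k + 1) (spider_edge s k))) =
    [:0, 1:] * [:1, -3, 1:] ^ (k - 1) * [:-1, 1:] ^ (s - k - 1) * spider_cubic s k"
    (is "char_poly ?L = ?P")
proof (rule poly_eqI_cofinite)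
  show "finite ({1} \<union> {x. poly [:1, -3, 1:] x = (0::complex)})"
    using poly_roots_finite[of "[:1, -3, 1:] :: complex poly"] by simp
next
  let ?n = "s + k + 1"
  fix a :: complex
  assume "a \<notin> {1} \<union> {x. poly [:1, -3, 1:] x = 0}"
  then have a: "a \<noteq> 1" "a\<^sup>2 - 3 * a + 1 \<noteq> 0"
    by (auto simp: algebra_simps power2_eq_square)
  have "poly (char_poly ?L) a = det (mat ?n ?n (\<lambda>(i, j).
      if i = j then a - of_nat (degree ?n (spider_edge s k) i) else if spider_edge s k i j then 1 else 0))"
    by (rule poly_char_poly_laplacian) (use assms spider_edge_irrefl in auto)
  also have "\<dots> = det (mat ?n ?n (\<lambda>(i, j). spider_char_entry s k a i j))"
    by (intro arg_cong[of _ _ det] cong_mat)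
      (use assms degree_spider_edge[of k s] in \<open>auto simp: spider_char_entry_def\<close>)
  also have "\<dots> =
      a * (a\<^sup>2 - 3 * a + 1) ^ (k - 1) * (a - 1) ^ (s - k - 1) * poly (spider_cubic s k) a"
    using assms a by (intro det_spider_char_mat) auto
  also have "\<dots> = poly ?P a"
  proof -
    have "poly [:0, 1:] a = a" "poly [:1, -3, 1:] a = a\<^sup>2 - 3 * a + 1" "poly [:-1, 1:] a = a - 1"
      by (simp_all add: algebra_simps power2_eq_square)
    then show ?thesis
      by (simp only: poly_mult poly_power)
  qed
  finally show "poly (char_poly ?L) a = poly ?P a" .
qed

lemma golden_quadratic_factor:
  "[:1, -3, 1:] =
     [:- complex_of_real ((3 - sqrt 5) / 2), 1:] * [:- complex_of_real ((3 + sqrt 5) / 2), 1:]"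
proof -
  let ?t = "complex_of_real ((3 - sqrt 5) / 2)" and ?u = "complex_of_real ((3 + sqrt 5) / 2)"
  have "(3 - sqrt 5) / 2 * ((3 + sqrt 5) / 2) = (1::real)"
    by (simp add: field_simps algebra_simps)
  then have "?t * ?u = 1"
    by (metis of_real_1 of_real_mult)
  moreover have "?t + ?u = 3"
    by (simp add: field_simps)
  moreover have "[:- ?t, 1:] * [:- ?u, 1:] = [:?t * ?u, - (?t + ?u), 1:]"
    by (simp add: algebra_simps)
  ultimately show ?thesis
    by simp
qed

theorem proposition3p2:
  fixes s k :: nat
  assumes "1 \<le> k" and "k < s"
  shows "spider_laplacian_spectrum s k =
           {#0#}
         + replicate_mset (k - 1) (complex_of_real ((3 - sqrt 5) / 2))
         + replicate_mset (s - k - 1) 1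
         + replicate_mset (k - 1) (complex_of_real ((3 + sqrt 5) / 2))
         + proots [: - of_nat (s + k + 1), of_nat (3 * s + 4), - of_nat (s + 4), 1 :]"
proof -
  have "spider_laplacian_spectrum s k =
      proots ([:0, 1:] * [:1, -3, 1:] ^ (k - 1) * [:-1, 1:] ^ (s - k - 1) * spider_cubic s k)"
    unfolding spider_laplacian_spectrum_def laplacian_spectrum_def
      char_poly_spider_laplacian[OF assms] ..
  also have "\<dots> = {#0#}
         + replicate_mset (k - 1) (complex_of_real ((3 - sqrt 5) / 2))
         + replicate_mset (s - k - 1) 1
         + replicate_mset (k - 1) (complex_of_real ((3 + sqrt 5) / 2))
         + proots (spider_cubic s k)"
    unfolding golden_quadratic_factor power_mult_distrib
    by (simp add: spider_cubic_nonzero proots_mult proots_power add_ac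
        del: mult_pCons_left mult_pCons_right)
  finally show ?thesis
    unfolding spider_cubic_def .
qed

end
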